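(* Let $\mathcal{L}$ be a horizontal segment $EF$ of length $1$ in the plane, and let $\mathcal{T}$ be an equilateral triangle (the convex hull of a V-shaped unit worm) with side length $\frac12$ and vertices $P,Q,R$ in counterclockwise order, labelled so that, with $O_2$ its centroid, $P=O_2+\frac{\sqrt3}{6}(\cos\beta,\sin\beta)$ for some $\beta\in[\frac{\pi}{6},\frac{5\pi}{6})$. Then $$\mu(\mathcal{L},\mathcal{T})\geq \tfrac14\max\Bigl\{\sin\bigl(\beta-\tfrac{\pi}{6}\bigr),\ \sin\bigl(\beta+\tfrac{\pi}{6}\bigr)\Bigr\}.$$
   Context: $\mu(K_1,\dots,K_n)$ denotes the area of the convex hull of $K_1\cup\dots\cup K_n$. (With this labelling, $\overrightarrow{QP}$ has argument $\beta-\frac{\pi}{6}$ and $\overrightarrow{RP}$ has argument $\beta+\frac{\pi}{6}$.) *)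

theory Defs
  imports "HOL-Analysis.Analysis"
begin

definition mu :: "(real^2) set list \<Rightarrow> real" where
  "mu Ks = measure lebesgue (convex hull (\<Union> (set Ks)))"

definition polar_pt :: "real^2 \<Rightarrow> real \<Rightarrow> real \<Rightarrow> real^2" where
  "polar_pt c r t = c + vector [r * cos t, r * sin t]"

end

theory Submission
  imports Defs
begin

text \<open>
  A convex set containing a horizontal segment \<open>EF\<close> of unit length and two points \<open>X, Y\<close> has
  area at least half the vertical distance of \<open>X\<close> and \<open>Y\<close>: it contains the triangle \<open>EFX\<close> or
  \<open>EFY\<close>, which suffices when \<open>X, Y\<close> lie on the same side of the line \<open>EF\<close>, and otherwise
  it contains their union, which overlaps only on that line. For \<open>X = P\<close> and \<open>Y = Q\<close>
  resp. \<open>Y = R\<close> the vertical distances are \<open>sin (\<beta> \<mp> \<pi>/6) / 2\<close>.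
\<close>

lemma convex_halfspace_component_ge: "convex {x::real^'n. c \<le> x $ k}"
  using convex_halfspace_ge[of c "axis k 1"] by (simp add: cart_eq_inner_axis inner_commute)

lemma convex_halfspace_component_le: "convex {x::real^'n. x $ k \<le> c}"
  using convex_halfspace_le[of "axis k 1" c] by (simp add: cart_eq_inner_axis inner_commute)

lemma negligible_hyperplane_component: "negligible {x::real^'n. x $ k = c}"
proof -
  have "axis k (1::real) \<in> Basis"
    by simp
  from negligible_standard_hyperplane[OF this, of c] show ?thesis
    by (simp add: cart_eq_inner_axis inner_commute)
qed

lemma measure_triangle_horizontal_base:
  fixes E F X :: "real^2"
  assumes "F $ 2 = E $ 2"
  shows "measure lebesgue (convex hull {E, F, X}) = \<bar>F $ 1 - E $ 1\<bar> * \<bar>X $ 2 - E $ 2\<bar> / 2"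
proof -
  have "measure lebesgue (convex hull {E, F, X}) = measure lborel (convex hull {E, F, X})"
    by (simp add: measure_completion compact_imp_closed finite_imp_compact_convex_hull)
  also have "\<dots> = \<bar>(X$1 - E$1) * (F$2 - E$2) - (F$1 - E$1) * (X$2 - E$2)\<bar> / 2"
    by (rule content_triangle)
  finally show ?thesis
    using assms by (simp add: abs_mult)
qed

lemma negligible_Int_triangles_opposite_sides:
  fixes E F X Y :: "real^2"
  assumes "F $ 2 = E $ 2" "Y $ 2 \<le> E $ 2" "E $ 2 \<le> X $ 2"
  shows "negligible (convex hull {E, F, X} \<inter> convex hull {E, F, Y})"
proof (rule negligible_subset[OF negligible_hyperplane_component])
  have "convex hull {E, F, X} \<subseteq> {x. E $ 2 \<le> x $ 2}"
    using assms by (intro hull_minimal convex_halfspace_component_ge) auto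
  moreover have "convex hull {E, F, Y} \<subseteq> {x. x $ 2 \<le> E $ 2}"
    using assms by (intro hull_minimal convex_halfspace_component_le) auto
  ultimately show "convex hull {E, F, X} \<inter> convex hull {E, F, Y} \<subseteq> {x. x $ 2 = E $ 2}"
    by fastforce
qed

lemma measure_convex_ge_height_diff_ordered:
  fixes E F X Y :: "real^2" and S :: "(real^2) set"
  assumes horiz: "F $ 2 = E $ 2" and YX: "Y $ 2 \<le> X $ 2"
    and S: "convex S" "S \<in> lmeasurable" and mem: "E \<in> S" "F \<in> S" "X \<in> S" "Y \<in> S"
  shows "\<bar>F $ 1 - E $ 1\<bar> * (X $ 2 - Y $ 2) / 2 \<le> measure lebesgue S"
proof -
  define b where "b = \<bar>F $ 1 - E $ 1\<bar>"
  define A where "A = convex hull {E, F, X}"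
  define B where "B = convex hull {E, F, Y}"
  have sub: "A \<subseteq> S" "B \<subseteq> S"
    unfolding A_def B_def using mem S by (simp_all add: hull_minimal)
  have meas: "A \<in> lmeasurable" "B \<in> lmeasurable"
    unfolding A_def B_def by (simp_all add: lmeasurable_compact finite_imp_compact_convex_hull)
  have area: "measure lebesgue A = b * \<bar>X $ 2 - E $ 2\<bar> / 2" "measure lebesgue B = b * \<bar>Y $ 2 - E $ 2\<bar> / 2"
    unfolding A_def B_def b_def using horiz by (simp_all add: measure_triangle_horizontal_base)
  have le_S: "measure lebesgue T \<le> measure lebesgue S" if "T \<subseteq> S" "T \<in> lmeasurable" for T
    using measure_mono_fmeasurable[of T S] that S by auto
  have "b \<ge> 0"
    by (simp add: b_def)
  consider "E $ 2 \<le> Y $ 2" | "X $ 2 \<le> E $ 2" | "Y $ 2 \<le> E $ 2" "E $ 2 \<le> X $ 2"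
    by linarith
  then show ?thesis
  proof cases
    case 1
    then have "b * (X $ 2 - Y $ 2) \<le> b * \<bar>X $ 2 - E $ 2\<bar>"
      using \<open>b \<ge> 0\<close> by (intro mult_left_mono) auto
    then show ?thesis
      using le_S[OF sub(1) meas(1)] area b_def by simp
  next
    case 2
    then have "b * (X $ 2 - Y $ 2) \<le> b * \<bar>Y $ 2 - E $ 2\<bar>"
      using \<open>b \<ge> 0\<close> by (intro mult_left_mono) auto
    then show ?thesis
      using le_S[OF sub(2) meas(2)] area b_def by simp
  next
    case 3
    then have "measure lebesgue (A \<inter> B) = 0"
      unfolding A_def B_def
      by (intro negligible_imp_measure0 negligible_Int_triangles_opposite_sides horiz)
    then have "measure lebesgue (A \<union> B) = measure lebesgue A + measure lebesgue B"
      using measure_Un3[OF meas] by simp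
    also have "\<dots> = b * (X $ 2 - Y $ 2) / 2"
      using area 3 by (simp add: field_simps)
    finally show ?thesis
      using le_S[OF _ fmeasurable.Un[OF meas]] sub b_def by auto
  qed
qed

lemma measure_convex_ge_height_diff:
  fixes E F X Y :: "real^2" and S :: "(real^2) set"
  assumes "F $ 2 = E $ 2" "convex S" "S \<in> lmeasurable" "E \<in> S" "F \<in> S" "X \<in> S" "Y \<in> S"
  shows "\<bar>F $ 1 - E $ 1\<bar> * \<bar>X $ 2 - Y $ 2\<bar> / 2 \<le> measure lebesgue S"
  using measure_convex_ge_height_diff_ordered[of F E Y X S]
    measure_convex_ge_height_diff_ordered[of F E X Y S] assms
  by (cases "Y $ 2 \<le> X $ 2") (auto simp: abs_if)

lemma polar_pt_component_2 [simp]: "polar_pt c r t $ 2 = c $ 2 + r * sin t"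
  by (simp add: polar_pt_def)

lemma sin_plus_two_thirds_pi: "sin (t + 2 * pi / 3) = - sin t / 2 + sqrt 3 / 2 * cos t"
proof -
  have "sin (2 * pi / 3) = sqrt 3 / 2" "cos (2 * pi / 3) = - 1 / 2"
    using sin_pi_minus[of "pi / 3"] cos_pi_minus[of "pi / 3"] by (simp_all add: sin_60 cos_60)
  then show ?thesis
    by (simp add: sin_add)
qed

lemma sin_plus_four_thirds_pi: "sin (t + 4 * pi / 3) = - sin t / 2 - sqrt 3 / 2 * cos t"
proof -
  have "sin (4 * pi / 3) = - sqrt 3 / 2" "cos (4 * pi / 3) = - 1 / 2"
    using sin_periodic_pi[of "pi / 3"] cos_periodic_pi[of "pi / 3"]
    by (simp_all add: sin_60 cos_60 add_divide_distrib)
  then show ?thesis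
    by (simp add: sin_add)
qed

lemma equilateral_height_diffs:
  fixes c :: "real^2"
  shows "polar_pt c (sqrt 3 / 6) t $ 2 - polar_pt c (sqrt 3 / 6) (t + 2 * pi / 3) $ 2 = sin (t - pi / 6) / 2"
    and "polar_pt c (sqrt 3 / 6) t $ 2 - polar_pt c (sqrt 3 / 6) (t + 4 * pi / 3) $ 2 = sin (t + pi / 6) / 2"
  unfolding polar_pt_component_2 sin_plus_two_thirds_pi sin_plus_four_thirds_pi
  by (simp_all add: sin_add sin_diff sin_30 cos_30 algebra_simps)

theorem mainTheorem6:
  fixes E F O2 P Q R :: "real^2" and \<beta> :: real
  assumes horiz: "F $ 2 = E $ 2" and len: "\<bar>F $ 1 - E $ 1\<bar> = 1"
    and beta: "pi / 6 \<le> \<beta>" "\<beta> < 5 * pi / 6"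
    and P: "P = polar_pt O2 (sqrt 3 / 6) \<beta>"
    and Q: "Q = polar_pt O2 (sqrt 3 / 6) (\<beta> + 2 * pi / 3)"
    and R: "R = polar_pt O2 (sqrt 3 / 6) (\<beta> + 4 * pi / 3)"
  shows "mu [closed_segment E F, convex hull {P, Q, R}]
           \<ge> 1 / 4 * max (sin (\<beta> - pi / 6)) (sin (\<beta> + pi / 6))"
proof -
  define S where "S = convex hull (closed_segment E F \<union> convex hull {P, Q, R})"
  have S: "convex S" "S \<in> lmeasurable"
    unfolding S_def by (simp, intro lmeasurable_compact compact_convex_hull compact_Un
        compact_segment finite_imp_compact_convex_hull) auto
  have mem: "E \<in> S" "F \<in> S" "P \<in> S" "Q \<in> S" "R \<in> S"
    unfolding S_def by (auto intro!: hull_inc)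
  have "\<bar>P $ 2 - Q $ 2\<bar> / 2 \<le> measure lebesgue S" "\<bar>P $ 2 - R $ 2\<bar> / 2 \<le> measure lebesgue S"
    using measure_convex_ge_height_diff[OF horiz S mem(1,2,3,4)]
      measure_convex_ge_height_diff[OF horiz S mem(1,2,3,5)] len by simp_all
  moreover have "P $ 2 - Q $ 2 = sin (\<beta> - pi / 6) / 2" "P $ 2 - R $ 2 = sin (\<beta> + pi / 6) / 2"
    unfolding P Q R by (rule equilateral_height_diffs)+
  ultimately show ?thesis
    by (simp add: mu_def S_def abs_le_iff)
qed

end
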